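(* There is an absolute constant $c>0$ such that for any $n>16$, any $\eta>0$, and any estimator $\hat\pi$ mapping $n$ i.i.d. action-reward pairs to a distribution in $\Delta(\mathcal A)$, $$\sup_{(\mathcal A,r,\pi^{\mathrm{ref}})\in\mathrm{MAB}_2}\ \mathbb E_{\mathcal D\sim P_{\pi^{\mathrm{ref}},r}}\big[\mathrm{SubOpt}(\hat\pi;\mathcal A,r,\pi^{\mathrm{ref}})\big]\ \ge\ c\,\Big(\frac{\eta}{n}\wedge\frac{1}{\sqrt n}\Big).$$
   Context: $\mathrm{MAB}_2$ denotes the class of offline two-armed bandits: action set $\mathcal A$ with $|\mathcal A|=2$ (single context), mean reward $r:\mathcal A\to[0,1]$, reference (behavior) policy $\pi^{\mathrm{ref}}\in\Delta(\mathcal A)$ with full support. The dataset $\mathcal D\sim P_{\pi^{\mathrm{ref}},r}$ consists of $n$ i.i.d. pairs $(a_i,r_i)$ with $a_i\sim\pi^{\mathrm{ref}}$ and $r_i=r(a_i)+\varepsilon_i$ with mean-zero $1$-subgaussian noise. For $\eta>0$, $J(\pi)=\sum_a r(a)\pi(a)-\eta^{-1}\mathrm{KL}(\pi^{\mathrm{ref}}\|\pi)$, $\pi^*=\arg\max_{\pi\in\Delta(\mathcal A)}J(\pi)$, $\mathrm{SubOpt}(\pi;\mathcal A,r,\pi^{\mathrm{ref}})=J(\pi^* )-J(\pi)$. *)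

theory Defs
  imports "HOL-Probability.Probability"
begin

text \<open>Two-armed bandit: the action set is the two-element type bool.
 Policies are functions bool => real lying in the probability policies.\<close>

definition policies :: "(bool \<Rightarrow> real) set" where
  "policies = {p. (\<forall>a. 0 \<le> p a) \<and> (\<Sum>a\<in>UNIV. p a) = 1}"

definition KL :: "(bool \<Rightarrow> real) \<Rightarrow> (bool \<Rightarrow> real) \<Rightarrow> ereal" where
  "KL pref p = (if (\<forall>a. 0 < pref a \<longrightarrow> 0 < p a)
      then ereal (\<Sum>a\<in>UNIV. if pref a = 0 then 0 else pref a * ln (pref a / p a))
      else \<infinity>)"

definition J :: "real \<Rightarrow> (bool \<Rightarrow> real) \<Rightarrow> (bool \<Rightarrow> real) \<Rightarrow> (bool \<Rightarrow> real) \<Rightarrow> ereal" where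
  "J \<eta> r pref p = ereal (\<Sum>a\<in>UNIV. r a * p a) - KL pref p / ereal \<eta>"

definition SubOpt :: "real \<Rightarrow> (bool \<Rightarrow> real) \<Rightarrow> (bool \<Rightarrow> real) \<Rightarrow> (bool \<Rightarrow> real) \<Rightarrow> ennreal" where
  "SubOpt \<eta> r pref p = e2ennreal ((SUP q\<in>policies. J \<eta> r pref q) - J \<eta> r pref p)"

definition subgaussian_noise :: "real measure \<Rightarrow> bool" where
  "subgaussian_noise \<nu> \<longleftrightarrow> prob_space \<nu> \<and> sets \<nu> = sets borel \<and>
     integrable \<nu> (\<lambda>x. x) \<and> (\<integral>x. x \<partial>\<nu>) = 0 \<and>
     (\<forall>l::real. integrable \<nu> (\<lambda>x. exp (l * x)) \<and> (\<integral>x. exp (l * x) \<partial>\<nu>) \<le> exp (l\<^sup>2 / 2))"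

definition MAB2 :: "((bool \<Rightarrow> real) \<times> (bool \<Rightarrow> real) \<times> real measure) set" where
  "MAB2 = {(r, pref, \<nu>). (\<forall>a. 0 \<le> r a \<and> r a \<le> 1) \<and> pref \<in> policies \<and> (\<forall>a. 0 < pref a)
            \<and> subgaussian_noise \<nu>}"

definition sample_space :: "(bool \<times> real) measure" where
  "sample_space = count_space UNIV \<Otimes>\<^sub>M borel"

definition sample_measure :: "(bool \<Rightarrow> real) \<Rightarrow> (bool \<Rightarrow> real) \<Rightarrow> real measure \<Rightarrow> (bool \<times> real) measure" where
  "sample_measure r pref \<nu> =
     distr (density (count_space UNIV) (\<lambda>a. ennreal (pref a)) \<Otimes>\<^sub>M \<nu>) sample_space
           (\<lambda>(a, e). (a, r a + e))"

definition data_measure :: "nat \<Rightarrow> (bool \<Rightarrow> real) \<Rightarrow> (bool \<Rightarrow> real) \<Rightarrow> real measure \<Rightarrow> (nat \<Rightarrow> bool \<times> real) measure" where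
  "data_measure n r pref \<nu> = PiM {..<n} (\<lambda>_. sample_measure r pref \<nu>)"

definition estimator :: "nat \<Rightarrow> ((nat \<Rightarrow> bool \<times> real) \<Rightarrow> (bool \<Rightarrow> real)) \<Rightarrow> bool" where
  "estimator n pihat \<longleftrightarrow> (\<forall>D. pihat D \<in> policies) \<and>
     (\<forall>a. (\<lambda>D. pihat D a) \<in> borel_measurable (PiM {..<n} (\<lambda>_. sample_space)))"

end

(* Le Cam's two-point method on a noiseless instance. The reference policy puts mass
   d = 1/(2n) on arm True, and the two reward functions agree on arm False. With
   probability (1 - d)^n >= 1/2 every sample pulls arm False, so the estimator outputs
   the same policy under both instances, and its worst expected suboptimality is at
   least a quarter of the smallest value, over all policies q, of SubOpt_1 q + SubOpt_2 q.
   For eta <= 8 the rewards differ by R = 1/40 on arm True; the KL penalty keeps the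
   optimum for r_1 within O(R eta d) of d, and the sum of suboptimalities is of order
   R^2 eta d, i.e. eta/n. For eta >= 8 the rewards differ by 1 on arm True, and the sum
   is bounded below by a constant. *)

theory Submission
  imports Defs
begin

lemma ln_add_one_ge:
  fixes u :: real
  assumes "0 \<le> u"
  shows "u - u\<^sup>2 / 2 \<le> ln (1 + u)"
proof -
  let ?f = "\<lambda>x::real. ln (1 + x) - x + x\<^sup>2 / 2"
  have "?f 0 \<le> ?f u"
  proof (rule DERIV_nonneg_imp_increasing_open[OF assms])
    fix x :: real
    assume x: "0 < x" "x < u"
    have "DERIV ?f x :> 1 / (1 + x) - 1 + x"
      using x by (auto intro!: derivative_eq_intros)
    moreover have "0 \<le> 1 / (1 + x) - 1 + x"
      using x by (simp add: field_simps power2_eq_square)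
    ultimately show "\<exists>y. DERIV ?f x :> y \<and> 0 \<le> y" by blast
  qed (intro continuous_intros, auto)
  then show ?thesis by simp
qed

lemma ln_le_half_diff_inverse:
  fixes x :: real
  assumes "1 \<le> x"
  shows "ln x \<le> (x - 1 / x) / 2"
proof -
  let ?f = "\<lambda>x::real. (x - 1 / x) / 2 - ln x"
  have "?f 1 \<le> ?f x"
  proof (rule DERIV_nonneg_imp_increasing_open[OF assms])
    fix y :: real
    assume y: "1 < y" "y < x"
    have "DERIV ?f y :> (1 + 1 / y\<^sup>2) / 2 - 1 / y"
      using y by (auto intro!: derivative_eq_intros simp: power2_eq_square field_simps)
    moreover have "(1 + 1 / y\<^sup>2) / 2 - 1 / y = (1 - 1 / y)\<^sup>2 / 2"
      using y by (simp add: field_simps power2_eq_square)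
    ultimately show "\<exists>z. DERIV ?f y :> z \<and> 0 \<le> z" by fastforce
  qed (intro continuous_intros, auto)
  then show ?thesis by simp
qed

definition binary_KL :: "real \<Rightarrow> real \<Rightarrow> real" where
  "binary_KL d p = d * ln (d / p) + (1 - d) * ln ((1 - d) / (1 - p))"

lemma binary_KL_self: "0 < d \<Longrightarrow> d < 1 \<Longrightarrow> binary_KL d d = 0"
  unfolding binary_KL_def by simp

lemma binary_KL_summands_ge:
  fixes d p :: real
  assumes "0 < d" "d < 1" "0 < p" "p < 1"
  shows "d - p \<le> d * ln (d / p)" and "p - d \<le> (1 - d) * ln ((1 - d) / (1 - p))"
proof -
  have "1 - p / d \<le> ln (d / p)"
    using ln_le_minus_one[of "p / d"] assms by (simp add: ln_div)
  then have "d * (1 - p / d) \<le> d * ln (d / p)"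
    using assms by (intro mult_left_mono) auto
  then show "d - p \<le> d * ln (d / p)"
    using assms by (simp add: algebra_simps)
  have "1 - (1 - p) / (1 - d) \<le> ln ((1 - d) / (1 - p))"
    using ln_le_minus_one[of "(1 - p) / (1 - d)"] assms by (simp add: ln_div)
  then have "(1 - d) * (1 - (1 - p) / (1 - d)) \<le> (1 - d) * ln ((1 - d) / (1 - p))"
    using assms by (intro mult_left_mono) auto
  moreover have "(1 - d) * (1 - (1 - p) / (1 - d)) = p - d"
    using assms by (simp add: field_simps)
  ultimately show "p - d \<le> (1 - d) * ln ((1 - d) / (1 - p))"
    by simp
qed

lemma binary_KL_nonneg: "0 < d \<Longrightarrow> d < 1 \<Longrightarrow> 0 < p \<Longrightarrow> p < 1 \<Longrightarrow> 0 \<le> binary_KL d p"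
  using binary_KL_summands_ge[of d p] unfolding binary_KL_def by linarith

lemma binary_KL_le_chi_square:
  fixes d p :: real
  assumes "0 < d" "d < 1" "0 < p" "p < 1"
  shows "binary_KL d p \<le> (d - p)\<^sup>2 / (p * (1 - p))"
proof -
  have "d * ln (d / p) \<le> d * (d / p - 1)"
    using assms by (intro mult_left_mono ln_le_minus_one) auto
  moreover have "(1 - d) * ln ((1 - d) / (1 - p)) \<le> (1 - d) * ((1 - d) / (1 - p) - 1)"
    using assms by (intro mult_left_mono ln_le_minus_one) auto
  moreover have "d * (d / p - 1) + (1 - d) * ((1 - d) / (1 - p) - 1) = (d - p)\<^sup>2 / (p * (1 - p))"
    using assms by (simp add: field_simps power2_eq_square)
  ultimately show ?thesis
    unfolding binary_KL_def by linarith
qed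

lemma binary_KL_ge:
  fixes d p :: real
  assumes "0 < d" "d < p" "p < 1"
  shows "(p - d)\<^sup>2 / (2 * p) \<le> binary_KL d p"
proof -
  have "ln (p / d) \<le> (p / d - d / p) / 2"
    using ln_le_half_diff_inverse[of "p / d"] assms by simp
  moreover have "ln (d / p) = - ln (p / d)"
    using assms by (simp add: ln_div)
  ultimately have "d * (- (p / d - d / p) / 2) \<le> d * ln (d / p)"
    using assms by (intro mult_left_mono) auto
  moreover have "d * (- (p / d - d / p) / 2) = d - p + (p - d)\<^sup>2 / (2 * p)"
    using assms by (simp add: field_simps power2_eq_square)
  ultimately show ?thesis
    using binary_KL_summands_ge(2)[of d p] assms unfolding binary_KL_def by linarith
qed

lemma binary_KL_shift_le:
  fixes d t :: real
  assumes "0 < d" "d \<le> 1/4" "0 \<le> t" "t \<le> 1/4"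
  shows "binary_KL d (d + t) \<le> t\<^sup>2 / (2 * d) + 4 * t\<^sup>2"
proof -
  have "ln (d / (d + t)) = - ln (1 + t / d)"
    using assms by (simp add: ln_div field_simps)
  then have "d * ln (d / (d + t)) \<le> d * (- (t / d - (t / d)\<^sup>2 / 2))"
    using ln_add_one_ge[of "t / d"] assms by (intro mult_left_mono) auto
  also have "\<dots> = t\<^sup>2 / (2 * d) - t"
    using assms by (simp add: field_simps power2_eq_square)
  finally have left: "d * ln (d / (d + t)) \<le> t\<^sup>2 / (2 * d) - t" .
  define w where "w = t / (1 - d)"
  have tw: "(1 - d) * w = t"
    using assms unfolding w_def by simp
  have w: "0 \<le> w" "w \<le> 1/2"
    using assms unfolding w_def by (auto simp: field_simps)
  have "w \<le> t / (1/2)"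
    unfolding w_def using assms by (intro divide_left_mono) auto
  then have tw_le: "t * w \<le> t * (2 * t)"
    using assms by (intro mult_left_mono) auto
  have "ln ((1 - d) / (1 - (d + t))) = - ln (1 - w)"
    using assms unfolding w_def by (simp add: ln_div field_simps)
  then have "(1 - d) * ln ((1 - d) / (1 - (d + t))) \<le> (1 - d) * (w + 2 * w\<^sup>2)"
    using ln_one_minus_pos_lower_bound[of w] w assms by (intro mult_left_mono) auto
  also have "\<dots> = ((1 - d) * w) * (1 + 2 * w)"
    by (simp add: algebra_simps power2_eq_square)
  also have "\<dots> = t + 2 * t * w"
    unfolding tw by (simp add: algebra_simps)
  also have "\<dots> \<le> t + 4 * t\<^sup>2"
    using tw_le by (simp add: power2_eq_square)
  finally show ?thesis
    using left unfolding binary_KL_def by linarith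
qed

(* With t = R eta d/2, the sum of the two suboptimalities at a policy p in the small-eta
   instance is at least [R t - KL(d, d + t)/eta] - [R (p - d) - 2 KL(d, p)/eta]; the two lemmas
   below bound the brackets by 11/32 and 10/32 times R^2 eta d. *)
lemma tilt_gain_ge:
  fixes d \<eta> R :: real
  assumes "0 < d" "d \<le> 1/32" "0 < \<eta>" "0 < R" "R * \<eta> \<le> 1/5"
  shows "11/32 * R\<^sup>2 * \<eta> * d \<le> R * (R * \<eta> * d / 2) - binary_KL d (d + R * \<eta> * d / 2) / \<eta>"
proof -
  define t where "t = R * \<eta> * d / 2"
  have "R * \<eta> * d \<le> 1/5 * (1/32)"
    using assms by (intro mult_mono) auto
  then have t: "0 \<le> t" "t \<le> 1/4"
    using assms unfolding t_def by auto
  have "binary_KL d (d + t) / \<eta> \<le> (t\<^sup>2 / (2 * d) + 4 * t\<^sup>2) / \<eta>"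
    using binary_KL_shift_le[of d t] assms t by (simp add: divide_right_mono)
  also have "\<dots> = R\<^sup>2 * \<eta> * d / 8 + R\<^sup>2 * \<eta> * d * d"
    using assms unfolding t_def by (simp add: field_simps power2_eq_square)
  also have "\<dots> \<le> R\<^sup>2 * \<eta> * d / 8 + R\<^sup>2 * \<eta> * d * (1/32)"
    using assms by (intro add_left_mono mult_left_mono) auto
  finally have "binary_KL d (d + t) / \<eta> \<le> 5/32 * R\<^sup>2 * \<eta> * d"
    by (simp add: algebra_simps)
  moreover have "R * t = 1/2 * R\<^sup>2 * \<eta> * d"
    unfolding t_def by (simp add: power2_eq_square)
  ultimately show ?thesis
    unfolding t_def by linarith
qed

lemma penalized_tilt_le:
  fixes d p \<eta> R :: real
  assumes d: "0 < d" "d < 1" and p: "0 < p" "p < 1" and "0 < \<eta>" "0 < R" "R * \<eta> \<le> 1/5"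
  shows "R * (p - d) - 2 * binary_KL d p / \<eta> \<le> 5/16 * R\<^sup>2 * \<eta> * d"
proof (cases "p \<le> d")
  case True
  then have "R * (p - d) \<le> 0"
    using assms by (simp add: mult_nonneg_nonpos)
  moreover have "0 \<le> 2 * binary_KL d p / \<eta>"
    using binary_KL_nonneg[OF d p] assms by simp
  moreover have "0 \<le> 5/16 * R\<^sup>2 * \<eta> * d"
    using assms by simp
  ultimately show ?thesis
    by linarith
next
  case False
  then have "d < p" by simp
  have "(p - d)\<^sup>2 / (\<eta> * p) = 2 * ((p - d)\<^sup>2 / (2 * p)) / \<eta>"
    using assms by simp
  also have "\<dots> \<le> 2 * binary_KL d p / \<eta>"
    using binary_KL_ge[of d p] \<open>d < p\<close> assms by (intro divide_right_mono mult_left_mono) auto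
  finally have KL_ge: "(p - d)\<^sup>2 / (\<eta> * p) \<le> 2 * binary_KL d p / \<eta>" .
  show ?thesis
  proof (cases "p \<le> 5/4 * d")
    case True
    have "(p - d)\<^sup>2 / (\<eta> * (5/4 * d)) \<le> (p - d)\<^sup>2 / (\<eta> * p)"
      using True \<open>d < p\<close> assms by (intro divide_left_mono mult_left_mono mult_pos_pos) auto
    moreover have "5/16 * R\<^sup>2 * \<eta> * d - (R * (p - d) - (p - d)\<^sup>2 / (\<eta> * (5/4 * d)))
        = 4 / (5 * \<eta> * d) * (p - d - 5/8 * R * \<eta> * d)\<^sup>2"
      using assms by (simp add: field_simps power2_eq_square)
    moreover have "0 \<le> 4 / (5 * \<eta> * d) * (p - d - 5/8 * R * \<eta> * d)\<^sup>2"
      using assms by simp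
    ultimately show ?thesis
      using KL_ge by linarith
  next
    case False
    then have "1/5 \<le> (p - d) / p"
      using assms by (simp add: field_simps)
    then have "(p - d) * (1/5) / \<eta> \<le> (p - d) * ((p - d) / p) / \<eta>"
      using \<open>d < p\<close> assms by (intro divide_right_mono mult_left_mono) auto
    also have "\<dots> = (p - d)\<^sup>2 / (\<eta> * p)"
      by (simp add: power2_eq_square)
    finally have "(p - d) / (5 * \<eta>) \<le> 2 * binary_KL d p / \<eta>"
      using KL_ge by simp
    moreover have "R \<le> 1 / (5 * \<eta>)"
      using assms by (simp add: field_simps)
    then have "R * (p - d) \<le> (p - d) / (5 * \<eta>)"
      using \<open>d < p\<close> mult_right_mono[of R "1 / (5 * \<eta>)" "p - d"] by simp
    moreover have "0 \<le> 5/16 * R\<^sup>2 * \<eta> * d"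
      using assms by simp
    ultimately show ?thesis
      by linarith
  qed
qed

definition bern :: "real \<Rightarrow> bool \<Rightarrow> real" where
  "bern p = (\<lambda>a. if a then p else 1 - p)"

lemma bern_in_policies: "0 \<le> p \<Longrightarrow> p \<le> 1 \<Longrightarrow> bern p \<in> policies"
  unfolding policies_def bern_def by (simp add: UNIV_bool)

lemma policiesE_bern:
  assumes "q \<in> policies"
  obtains p where "q = bern p" "0 \<le> p" "p \<le> 1"
proof
  have "q True + q False = 1" "0 \<le> q True" "0 \<le> q False"
    using assms unfolding policies_def by (auto simp: UNIV_bool add.commute)
  then show "q = bern (q True)" "0 \<le> q True" "q True \<le> 1"
    unfolding bern_def by (auto intro!: ext)
qed

definition J_bern :: "real \<Rightarrow> (bool \<Rightarrow> real) \<Rightarrow> real \<Rightarrow> real \<Rightarrow> real" where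
  "J_bern \<eta> r d p = r True * p + r False * (1 - p) - binary_KL d p / \<eta>"

lemma J_of_bern:
  assumes "0 < d" "d < 1" "0 < p" "p < 1" "0 < \<eta>"
  shows "J \<eta> r (bern d) (bern p) = ereal (J_bern \<eta> r d p)"
  using assms unfolding J_def KL_def J_bern_def binary_KL_def bern_def by (simp add: UNIV_bool add.commute)

lemma J_of_bern_degenerate:
  assumes "0 < d" "d < 1" "p = 0 \<or> p = 1" "0 < \<eta>"
  shows "J \<eta> r (bern d) (bern p) = - \<infinity>"
  using assms unfolding J_def KL_def bern_def by auto

lemma SubOpt_ge:
  assumes "q \<in> policies" "J \<eta> r pref q = ereal a" "J \<eta> r pref p = ereal b"
  shows "ennreal (a - b) \<le> SubOpt \<eta> r pref p"
proof -
  have "ereal a \<le> (SUP q\<in>policies. J \<eta> r pref q)"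
    using assms(1,2) by (metis SUP_upper)
  then have "ereal (a - b) \<le> (SUP q\<in>policies. J \<eta> r pref q) - J \<eta> r pref p"
    using assms(3) ereal_minus_mono[of "ereal a" _ "ereal b" "ereal b"] by simp
  then show ?thesis
    unfolding SubOpt_def using e2ennreal_mono by fastforce
qed

lemma SubOpt_eq_top:
  assumes "q \<in> policies" "J \<eta> r pref q = ereal a" "J \<eta> r pref p = - \<infinity>"
  shows "SubOpt \<eta> r pref p = \<top>"
proof -
  have "ereal a \<le> (SUP q\<in>policies. J \<eta> r pref q)"
    using assms(1,2) by (metis SUP_upper)
  then have "(SUP q\<in>policies. J \<eta> r pref q) - J \<eta> r pref p = \<infinity>"
    using assms(3) by (cases "SUP q\<in>policies. J \<eta> r pref q") auto
  then show ?thesis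
    unfolding SubOpt_def by simp
qed

lemma SubOpt_bern_sum_ge:
  assumes d: "0 < d" "d < 1" and "0 < \<eta>" and p\<^sub>1: "0 < p\<^sub>1" "p\<^sub>1 < 1" and p\<^sub>2: "0 < p\<^sub>2" "p\<^sub>2 < 1"
    and gap: "\<And>p. 0 < p \<Longrightarrow> p < 1 \<Longrightarrow>
      g \<le> (J_bern \<eta> r\<^sub>1 d p\<^sub>1 - J_bern \<eta> r\<^sub>1 d p) + (J_bern \<eta> r\<^sub>2 d p\<^sub>2 - J_bern \<eta> r\<^sub>2 d p)"
    and "q \<in> policies"
  shows "ennreal g \<le> SubOpt \<eta> r\<^sub>1 (bern d) q + SubOpt \<eta> r\<^sub>2 (bern d) q"
proof -
  obtain p where q: "q = bern p" "0 \<le> p" "p \<le> 1"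
    using policiesE_bern[OF \<open>q \<in> policies\<close>] .
  have best1: "bern p\<^sub>1 \<in> policies" "J \<eta> r\<^sub>1 (bern d) (bern p\<^sub>1) = ereal (J_bern \<eta> r\<^sub>1 d p\<^sub>1)"
    using p\<^sub>1 d \<open>0 < \<eta>\<close> by (auto intro: bern_in_policies J_of_bern)
  have best2: "bern p\<^sub>2 \<in> policies" "J \<eta> r\<^sub>2 (bern d) (bern p\<^sub>2) = ereal (J_bern \<eta> r\<^sub>2 d p\<^sub>2)"
    using p\<^sub>2 d \<open>0 < \<eta>\<close> by (auto intro: bern_in_policies J_of_bern)
  consider "p = 0 \<or> p = 1" | "0 < p" "p < 1"
    using q by linarith
  then show ?thesis
  proof cases
    case 1
    then have "SubOpt \<eta> r\<^sub>1 (bern d) q = \<top>"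
      using SubOpt_eq_top[OF best1] J_of_bern_degenerate d \<open>0 < \<eta>\<close> q by blast
    then show ?thesis
      by simp
  next
    case 2
    have "ennreal g \<le> ennreal (J_bern \<eta> r\<^sub>1 d p\<^sub>1 - J_bern \<eta> r\<^sub>1 d p) + ennreal (J_bern \<eta> r\<^sub>2 d p\<^sub>2 - J_bern \<eta> r\<^sub>2 d p)"
      using gap[OF 2] by (auto simp: ennreal_plus_if intro: ennreal_leI)
    also have "\<dots> \<le> SubOpt \<eta> r\<^sub>1 (bern d) q + SubOpt \<eta> r\<^sub>2 (bern d) q"
      using SubOpt_ge[OF best1] SubOpt_ge[OF best2] J_of_bern[OF d 2 \<open>0 < \<eta>\<close>] q by (simp add: add_mono)
    finally show ?thesis .
  qed
qed

lemma SubOpt_sum_ge_small_eta: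
  fixes d \<eta> R :: real
  assumes "0 < d" "d \<le> 1/32" "0 < \<eta>" "0 < R" "R * \<eta> \<le> 1/5" "q \<in> policies"
  shows "ennreal (R\<^sup>2 * \<eta> * d / 32)
    \<le> SubOpt \<eta> (\<lambda>a. if a then R else 0) (bern d) q + SubOpt \<eta> (\<lambda>_. 0) (bern d) q"
proof (rule SubOpt_bern_sum_ge[where p\<^sub>1 = "d + R * \<eta> * d / 2" and p\<^sub>2 = d])
  have "R * \<eta> * d \<le> 1/5 * (1/32)"
    using assms by (intro mult_mono) auto
  then show "d + R * \<eta> * d / 2 < 1"
    using assms by linarith
  have "0 \<le> R * \<eta> * d"
    using assms by simp
  then show "0 < d + R * \<eta> * d / 2"
    using assms by linarith
  fix p :: real
  assume "0 < p" "p < 1"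
  then show "R\<^sup>2 * \<eta> * d / 32
    \<le> (J_bern \<eta> (\<lambda>a. if a then R else 0) d (d + R * \<eta> * d / 2) - J_bern \<eta> (\<lambda>a. if a then R else 0) d p)
      + (J_bern \<eta> (\<lambda>_. 0) d d - J_bern \<eta> (\<lambda>_. 0) d p)"
    using tilt_gain_ge[of d \<eta> R] penalized_tilt_le[of d p \<eta> R] assms
    by (simp add: J_bern_def binary_KL_self algebra_simps)
qed (use assms in auto)

lemma SubOpt_sum_ge_large_eta:
  fixes d \<eta> :: real
  assumes "0 < d" "d \<le> 1/32" "8 \<le> \<eta>" "q \<in> policies"
  shows "ennreal (1/10) \<le> SubOpt \<eta> (\<lambda>a. if a then 1 else 1/2) (bern d) q
    + SubOpt \<eta> (\<lambda>a. if a then 0 else 1/2) (bern d) q"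
proof (rule SubOpt_bern_sum_ge[where p\<^sub>1 = "1/2" and p\<^sub>2 = d])
  have "binary_KL d (1/2) \<le> (d - 1/2)\<^sup>2 / (1/2 * (1 - 1/2))"
    using binary_KL_le_chi_square[of d "1/2"] assms by simp
  also have "\<dots> \<le> 1"
    using assms by (simp add: power2_eq_square field_simps)
  finally have "binary_KL d (1/2) / \<eta> \<le> 1/8"
    using assms by (simp add: field_simps)
  moreover fix p :: real
  assume "0 < p" "p < 1"
  moreover have "0 \<le> binary_KL d p / \<eta>"
    using binary_KL_nonneg[of d p] \<open>0 < p\<close> \<open>p < 1\<close> assms by simp
  moreover have "(J_bern \<eta> (\<lambda>a. if a then 1 else 1/2) d (1/2) - J_bern \<eta> (\<lambda>a. if a then 1 else 1/2) d p)
      + (J_bern \<eta> (\<lambda>a. if a then 0 else 1/2) d d - J_bern \<eta> (\<lambda>a. if a then 0 else 1/2) d p)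
      = 1/4 - d/2 - binary_KL d (1/2) / \<eta> + 2 * (binary_KL d p / \<eta>)"
    using assms by (simp add: J_bern_def binary_KL_self field_simps)
  ultimately show "1/10 \<le> (J_bern \<eta> (\<lambda>a. if a then 1 else 1/2) d (1/2) - J_bern \<eta> (\<lambda>a. if a then 1 else 1/2) d p)
      + (J_bern \<eta> (\<lambda>a. if a then 0 else 1/2) d d - J_bern \<eta> (\<lambda>a. if a then 0 else 1/2) d p)"
    using assms by linarith
qed (use assms in auto)

lemma subgaussian_noise_return_0: "subgaussian_noise (return borel (0::real))"
proof -
  have integrable: "integrable (return borel 0) f" if "f \<in> borel_measurable borel" for f :: "real \<Rightarrow> real"
  proof (rule integrableI_bounded)
    show "(\<integral>\<^sup>+ x. ennreal (norm (f x)) \<partial>return borel 0) < \<infinity>"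
      using that by (subst nn_integral_return) auto
  qed (use that in simp)
  show ?thesis
    unfolding subgaussian_noise_def
    by (auto intro!: prob_space_return integrable simp: integral_return)
qed

lemma noiseless_bern_in_MAB2:
  assumes "\<forall>a. 0 \<le> r a \<and> r a \<le> 1" "0 < d" "d < 1"
  shows "(r, bern d, return borel 0) \<in> MAB2"
proof -
  have "\<forall>a. 0 < bern d a"
    using assms by (simp add: bern_def)
  then show ?thesis
    unfolding MAB2_def using assms bern_in_policies[of d] subgaussian_noise_return_0
    by (intro CollectI case_prodI conjI) auto
qed

lemma emeasure_density_count_space_singleton:
  "emeasure (density (count_space UNIV) (\<lambda>a. ennreal (f a))) {a} = ennreal (f a)"
  by (subst emeasure_density) (auto simp: nn_integral_count_space_indicator)

lemma measurable_sample_map: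
  assumes "sets \<nu> = sets borel"
  shows "(\<lambda>(a, e). (a, r a + e)) \<in> density (count_space UNIV) f \<Otimes>\<^sub>M \<nu> \<rightarrow>\<^sub>M sample_space"
proof -
  have "sets (density (count_space UNIV) f \<Otimes>\<^sub>M \<nu>) = sets (count_space UNIV \<Otimes>\<^sub>M borel)"
    using assms by (intro sets_pair_measure_cong) auto
  moreover have "(\<lambda>(a, e). (a, r a + e)) \<in> count_space UNIV \<Otimes>\<^sub>M borel \<rightarrow>\<^sub>M sample_space"
    unfolding sample_space_def by measurable
  ultimately show ?thesis
    using measurable_cong_sets by blast
qed

lemma prob_space_sample_measure:
  assumes "pref \<in> policies" "prob_space \<nu>" "sets \<nu> = sets borel"
  shows "prob_space (sample_measure r pref \<nu>)"
proof -
  have "emeasure (density (count_space UNIV) (\<lambda>a. ennreal (pref a))) UNIV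
      = ennreal (\<Sum>a\<in>UNIV. pref a)"
    using assms(1) unfolding policies_def
    by (subst emeasure_density) (auto simp: nn_integral_count_space_finite sum_ennreal)
  then have "prob_space (density (count_space UNIV) (\<lambda>a. ennreal (pref a)))"
    using assms(1) unfolding policies_def by (intro prob_spaceI) simp
  then show ?thesis
    unfolding sample_measure_def
    by (intro prob_space.prob_space_distr prob_space_pair measurable_sample_map assms)
qed

lemma singleton_in_sets_sample_space: "{x} \<in> sets sample_space"
proof -
  have "{fst x} \<times> {snd x} \<in> sets (count_space UNIV \<Otimes>\<^sub>M borel)"
    by (rule pair_measureI) auto
  then show ?thesis
    unfolding sample_space_def by simp
qed

lemma emeasure_sample_measure_noiseless:
  "emeasure (sample_measure r pref (return borel 0)) {(a, r a)} = ennreal (pref a)"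
proof -
  let ?A = "density (count_space UNIV) (\<lambda>a. ennreal (pref a))"
  let ?N = "return borel (0::real)"
  have "(\<lambda>(a, e). (a, r a + e)) -` {(a, r a)} \<inter> space (?A \<Otimes>\<^sub>M ?N) = {a} \<times> {0}"
    by (auto simp: space_pair_measure)
  then have "emeasure (sample_measure r pref ?N) {(a, r a)} = emeasure (?A \<Otimes>\<^sub>M ?N) ({a} \<times> {0})"
    unfolding sample_measure_def
    by (simp add: emeasure_distr measurable_sample_map singleton_in_sets_sample_space)
  also have "\<dots> = emeasure ?A {a} * emeasure ?N {0}"
  proof -
    interpret sigma_finite_measure ?N
      by (simp add: prob_space_imp_sigma_finite prob_space_return)
    show ?thesis
      by (rule emeasure_pair_measure_Times) auto
  qed
  finally show ?thesis
    by (simp add: emeasure_density_count_space_singleton)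
qed

lemma nn_integral_PiM_ge_point:
  fixes f :: "('i \<Rightarrow> 'a) \<Rightarrow> ennreal"
  assumes "finite I" "sigma_finite_measure M" "{x} \<in> sets M"
  shows "emeasure M {x} ^ card I * f (\<lambda>i\<in>I. x) \<le> (\<integral>\<^sup>+ D. f D \<partial>PiM I (\<lambda>_. M))"
proof -
  interpret product_sigma_finite "\<lambda>_. M"
    using assms(2) by (simp add: product_sigma_finite_def)
  have point: "Pi\<^sub>E I (\<lambda>_. {x}) = {\<lambda>i\<in>I. x}"
    by (auto simp: PiE_iff extensional_def restrict_def)
  have sets: "Pi\<^sub>E I (\<lambda>_. {x}) \<in> sets (PiM I (\<lambda>_. M))"
    using assms by (intro sets_PiM_I_finite) auto
  have "emeasure (PiM I (\<lambda>_. M)) (Pi\<^sub>E I (\<lambda>_. {x})) = emeasure M {x} ^ card I"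
    using assms by (subst emeasure_PiM) auto
  then have "emeasure M {x} ^ card I * f (\<lambda>i\<in>I. x)
      = (\<integral>\<^sup>+ D. f (\<lambda>i\<in>I. x) * indicator (Pi\<^sub>E I (\<lambda>_. {x})) D \<partial>PiM I (\<lambda>_. M))"
    using nn_integral_cmult_indicator[OF sets] by (simp add: mult.commute)
  also have "\<dots> \<le> (\<integral>\<^sup>+ D. f D \<partial>PiM I (\<lambda>_. M))"
    by (intro nn_integral_mono) (auto simp: point split: split_indicator)
  finally show ?thesis .
qed

lemma data_measure_noiseless_ge:
  assumes "pref \<in> policies"
  shows "ennreal (pref a ^ n) * f (\<lambda>i\<in>{..<n}. (a, r a))
    \<le> (\<integral>\<^sup>+ D. f D \<partial>data_measure n r pref (return borel 0))"
proof -
  have "prob_space (sample_measure r pref (return borel 0))"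
    using assms by (intro prob_space_sample_measure prob_space_return) auto
  moreover have "{(a, r a)} \<in> sets (sample_measure r pref (return borel 0))"
    unfolding sample_measure_def by (simp add: singleton_in_sets_sample_space)
  ultimately have "emeasure (sample_measure r pref (return borel 0)) {(a, r a)} ^ card {..<n} * f (\<lambda>i\<in>{..<n}. (a, r a))
      \<le> (\<integral>\<^sup>+ D. f D \<partial>data_measure n r pref (return borel 0))"
    unfolding data_measure_def by (intro nn_integral_PiM_ge_point prob_space_imp_sigma_finite) auto
  moreover have "0 \<le> pref a"
    using assms unfolding policies_def by simp
  ultimately show ?thesis
    by (simp add: emeasure_sample_measure_noiseless ennreal_power)
qed

(* D\<^sub>0 is the dataset in which every sample is arm False: it has probability (1 - d)^n
   under both instances, and the estimator returns the same policy on it. *)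
lemma two_point_lower_bound:
  fixes r\<^sub>1 r\<^sub>2 :: "bool \<Rightarrow> real"
  assumes d: "0 < d" "d < 1" and "0 \<le> c" "c \<le> (1 - d) ^ n"
    and r\<^sub>1: "\<forall>a. 0 \<le> r\<^sub>1 a \<and> r\<^sub>1 a \<le> 1" and r\<^sub>2: "\<forall>a. 0 \<le> r\<^sub>2 a \<and> r\<^sub>2 a \<le> 1"
    and agree: "r\<^sub>1 False = r\<^sub>2 False"
    and pihat: "\<And>D. pihat D \<in> policies"
    and "0 \<le> g"
    and gap: "\<And>q. q \<in> policies \<Longrightarrow> ennreal g \<le> SubOpt \<eta> r\<^sub>1 (bern d) q + SubOpt \<eta> r\<^sub>2 (bern d) q"
  shows "ennreal (c * g / 2)
    \<le> (SUP (r, pref, \<nu>)\<in>MAB2. \<integral>\<^sup>+ D. SubOpt \<eta> r pref (pihat D) \<partial>data_measure n r pref \<nu>)"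
    (is "_ \<le> ?S")
proof -
  define D\<^sub>0 where "D\<^sub>0 = (\<lambda>i\<in>{..<n}. (False, r\<^sub>1 False))"
  have risk_ge: "ennreal ((1 - d) ^ n) * SubOpt \<eta> r (bern d) (pihat D\<^sub>0) \<le> ?S"
    if r: "\<forall>a. 0 \<le> r a \<and> r a \<le> 1" "r False = r\<^sub>1 False" for r
  proof -
    have "ennreal ((1 - d) ^ n) * SubOpt \<eta> r (bern d) (pihat D\<^sub>0)
        \<le> (\<integral>\<^sup>+ D. SubOpt \<eta> r (bern d) (pihat D) \<partial>data_measure n r (bern d) (return borel 0))"
      using data_measure_noiseless_ge[of "bern d" False n "\<lambda>D. SubOpt \<eta> r (bern d) (pihat D)" r]
        bern_in_policies[of d] d r(2) unfolding D\<^sub>0_def by (simp add: bern_def)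
    also have "\<dots> \<le> ?S"
      by (rule SUP_upper2[OF noiseless_bern_in_MAB2[OF r(1) d]]) simp
    finally show ?thesis .
  qed
  have "ennreal (c * g) \<le> ennreal ((1 - d) ^ n * g)"
    using \<open>c \<le> (1 - d) ^ n\<close> \<open>0 \<le> g\<close> by (intro ennreal_leI mult_right_mono)
  also have "\<dots> = ennreal ((1 - d) ^ n) * ennreal g"
    using d \<open>0 \<le> g\<close> by (simp add: ennreal_mult)
  also have "\<dots> \<le> ennreal ((1 - d) ^ n) * (SubOpt \<eta> r\<^sub>1 (bern d) (pihat D\<^sub>0) + SubOpt \<eta> r\<^sub>2 (bern d) (pihat D\<^sub>0))"
    by (intro mult_left_mono gap pihat) simp
  also have "\<dots> \<le> 2 * ?S"
    using risk_ge[OF r\<^sub>1] risk_ge[OF r\<^sub>2] agree by (simp add: distrib_left mult_2 add_mono)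
  finally show ?thesis
    using \<open>0 \<le> c\<close> \<open>0 \<le> g\<close> by (simp add: ennreal_divide_numeral[symmetric] divide_le_posI_ennreal)
qed

theorem theoremE3:
  shows "\<exists>c>0. \<forall>n::nat. \<forall>\<eta>::real. \<forall>pihat.
    n > 16 \<longrightarrow> \<eta> > 0 \<longrightarrow> estimator n pihat \<longrightarrow>
    (SUP (r, pref, \<nu>)\<in>MAB2. \<integral>\<^sup>+ D. SubOpt \<eta> r pref (pihat D) \<partial>(data_measure n r pref \<nu>))
      \<ge> ennreal (c * min (\<eta> / real n) (1 / sqrt (real n)))"
proof (intro exI[of _ "1/409600"] conjI allI impI)
  fix n :: nat and \<eta> :: real and pihat :: "(nat \<Rightarrow> bool \<times> real) \<Rightarrow> (bool \<Rightarrow> real)"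
  assume n: "n > 16" and "\<eta> > 0" and "estimator n pihat"
  then have pihat: "\<And>D. pihat D \<in> policies"
    unfolding estimator_def by blast
  define d :: real where "d = 1 / (2 * n)"
  have d: "0 < d" "d \<le> 1/32" "d < 1"
    using n unfolding d_def by (auto simp: field_simps)
  have "1/2 \<le> (1 - d) ^ n"
    using Bernoulli_inequality[of "- d" n] d n unfolding d_def by simp
  note two_point = two_point_lower_bound[OF d(1,3) _ this _ _ _ pihat]
  show "ennreal (1/409600 * min (\<eta> / real n) (1 / sqrt (real n))) \<le> (SUP (r, pref, \<nu>)\<in>MAB2.
      \<integral>\<^sup>+ D. SubOpt \<eta> r pref (pihat D) \<partial>data_measure n r pref \<nu>)"
  proof (cases "\<eta> \<le> 8")
    case True
    have "1/409600 * min (\<eta> / real n) (1 / sqrt (real n)) \<le> 1/2 * ((1/40)\<^sup>2 * \<eta> * d / 32) / 2"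
      using n unfolding d_def by (simp add: field_simps)
    then show ?thesis
      using \<open>\<eta> > 0\<close> True d
      by (intro order_trans[OF ennreal_leI two_point[where g = "(1/40)\<^sup>2 * \<eta> * d / 32"
          and r\<^sub>1 = "\<lambda>a. if a then 1/40 else 0" and r\<^sub>2 = "\<lambda>_. 0"]]
          SubOpt_sum_ge_small_eta) auto
  next
    case False
    have "1 / sqrt (real n) \<le> 1"
      using n by simp
    then have "1/409600 * min (\<eta> / real n) (1 / sqrt (real n)) \<le> 1/2 * (1/10) / 2"
      by linarith
    then show ?thesis
      using False d
      by (intro order_trans[OF ennreal_leI two_point[where g = "1/10"
          and r\<^sub>1 = "\<lambda>a. if a then 1 else 1/2" and r\<^sub>2 = "\<lambda>a. if a then 0 else 1/2"]]
          SubOpt_sum_ge_large_eta) auto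
  qed
qed simp

end
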